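(* Let $\lambda_1,\lambda_2$, $\Omega$, $\varphi$, $B$, $U$ be as in the context, with $(c,\theta)\in\Omega$, and let $G(u)=\int_0^u\frac{c-\varphi'(s)}{B(s)}\,ds$. Then: (1) $G$ is odd; (2) $G(u+U)=G(u)+G(U)$ for all $u\in\mathbb{R}$; (3) $G(kU)=kG(U)$ for all $k\in\mathbb{Z}$; (4) $G(kU/2)=kG(U)/2$ for all odd integers $k$.
   Context: Either $\lambda_1>\lambda_2>0$ or $\lambda_1=\lambda_2=1$. For $c>0$ put $\theta_c^+=\pi$ if $c>\sqrt2\lambda_1$ and $\theta_c^+=\arccos(1-c^2/\lambda_1^2)$ if $0<c\le\sqrt2\lambda_1$; $\Omega=\{(c,\theta): c>0,\ |\theta|<\theta_c^+\}$. For $(c,\theta)\in\Omega$: $D=\sin\theta/c$; $\varphi:\mathbb{R}\to\mathbb{R}$ is the global solution of $\varphi'(u)=\sqrt{c^2+2\cos\theta\,B(u)-D^2B(u)^2}$, $\varphi(0)=0$, where $B(u)=\lambda_1^2\cos^2\varphi(u)+\lambda_2^2\sin^2\varphi(u)$; $\varphi$ is an odd increasing bijection and $U>0$ is the unique number with $\varphi(U)=\pi$. *)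

theory Defs
  imports "HOL-Analysis.Analysis"
begin

definition theta_plus :: "real \<Rightarrow> real \<Rightarrow> real" where
  "theta_plus l1 c = (if c > sqrt 2 * l1 then pi else arccos (1 - c\<^sup>2 / l1\<^sup>2))"

definition Omega :: "real \<Rightarrow> (real \<times> real) set" where
  "Omega l1 = {(c, \<theta>). c > 0 \<and> \<bar>\<theta>\<bar> < theta_plus l1 c}"

definition Bfun :: "real \<Rightarrow> real \<Rightarrow> (real \<Rightarrow> real) \<Rightarrow> real \<Rightarrow> real" where
  "Bfun l1 l2 \<phi> u = l1\<^sup>2 * (cos (\<phi> u))\<^sup>2 + l2\<^sup>2 * (sin (\<phi> u))\<^sup>2"

definition Gfun :: "real \<Rightarrow> real \<Rightarrow> real \<Rightarrow> (real \<Rightarrow> real) \<Rightarrow> real \<Rightarrow> real" where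
  "Gfun l1 l2 c \<phi> u = (LBINT s=0..u. (c - deriv \<phi> s) / Bfun l1 l2 \<phi> s)"

end

theory Submission
  imports Defs
begin

text \<open>
  Viewed as a function of the angle, the speed \<open>\<phi>' = g(\<phi>)\<close> is positive (this is where \<open>\<Omega>\<close>
  is used), even and \<open>\<pi>\<close>-periodic. Hence the travel time \<open>T(x) = \<integral>\<^sub>0\<^sup>x dy / g(y)\<close>, which
  inverts \<open>\<phi>\<close>, is odd and satisfies \<open>T(x + \<pi>) = T(x) + U\<close>; so \<open>\<phi>\<close> is odd and
  \<open>\<phi>(u + U) = \<phi>(u) + \<pi>\<close>. The integrand of \<open>G\<close> is a function of \<open>\<phi>\<close> of the same kind, hence
  even and \<open>U\<close>-periodic in \<open>u\<close>, so \<open>G\<close> is odd with \<open>G(u + U) = G(u) + G(U)\<close>. Everything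
  else is arithmetic; in particular \<open>G(U/2) = G(-U/2 + U) = -G(U/2) + G(U)\<close>.
\<close>

lemma has_real_derivative_interval_integral_0:
  fixes f :: "real \<Rightarrow> real"
  assumes "continuous_on UNIV f"
  shows "((\<lambda>x. LBINT y=0..x. f y) has_real_derivative f x) (at x)"
proof -
  let ?a = "min 0 x - 1" and ?b = "max 0 x + 1"
  have "((\<lambda>x. LBINT y=0..x. f y) has_vector_derivative f x) (at x within {?a..?b})"
    using interval_integral_FTC2[of ?a 0 ?b f x] continuous_on_subset[OF assms]
    by (auto simp: zero_ereal_def)
  moreover have "x \<in> interior {?a..?b}" by auto
  ultimately have "((\<lambda>x. LBINT y=0..x. f y) has_vector_derivative f x) (at x)"
    using at_within_interior by metis
  then show ?thesis by (simp add: has_real_derivative_iff_has_vector_derivative)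
qed

lemma interval_integral_0_0 [simp]: "(LBINT y=0..ereal 0. f y) = 0"
  by (simp add: zero_ereal_def)

lemma interval_integral_0_odd:
  fixes f :: "real \<Rightarrow> real" and x :: real
  assumes cont: "continuous_on UNIV f" and even: "\<And>y. f (-y) = f y"
  shows "(LBINT y=0..-x. f y) = - (LBINT y=0..x. f y)"
proof -
  define F where "F x = (LBINT y=0..x. f y)" for x :: real
  have F': "(F has_real_derivative f x) (at x)" for x
    unfolding F_def by (rule has_real_derivative_interval_integral_0[OF cont])
  have "((\<lambda>x. F (-x) + F x) has_real_derivative 0) (at x)" for x
  proof -
    have "((\<lambda>x. F (-x)) has_real_derivative f (-x) * -1) (at x)"
      by (rule DERIV_chain2[OF F']) (auto intro!: derivative_eq_intros)
    from DERIV_add[OF this F'] show ?thesis by (simp add: even)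
  qed
  from DERIV_isconst_all[OF allI, OF this, of x 0] show ?thesis by (simp add: F_def)
qed

lemma interval_integral_0_add_period:
  fixes f :: "real \<Rightarrow> real" and x p :: real
  assumes cont: "continuous_on UNIV f" and periodic: "\<And>y. f (y + p) = f y"
  shows "(LBINT y=0..x + p. f y) = (LBINT y=0..x. f y) + (LBINT y=0..p. f y)"
proof -
  define F where "F x = (LBINT y=0..x. f y)" for x :: real
  have F': "(F has_real_derivative f x) (at x)" for x
    unfolding F_def by (rule has_real_derivative_interval_integral_0[OF cont])
  have "((\<lambda>x. F (x + p) - F x) has_real_derivative 0) (at x)" for x
  proof -
    have "((\<lambda>x. F (x + p)) has_real_derivative f (x + p) * 1) (at x)"
      by (rule DERIV_chain2[OF F']) (auto intro!: derivative_eq_intros)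
    from DERIV_diff[OF this F'] show ?thesis by (simp add: periodic)
  qed
  from DERIV_isconst_all[OF allI, OF this, of x 0] show ?thesis by (simp add: F_def)
qed

lemma odd_shift_additive_multiples:
  fixes G :: "real \<Rightarrow> real"
  assumes odd: "\<And>u. G (-u) = - G u" and shift: "\<And>u. G (u + U) = G u + G U"
  shows "G (of_int k * U) = of_int k * G U"
    and "odd k \<Longrightarrow> G (of_int k * U / 2) = of_int k * G U / 2"
proof -
  have shift_nat: "G (u + of_nat n * U) = G u + of_nat n * G U" for u n
  proof (induction n)
    case (Suc n)
    have "G (u + of_nat (Suc n) * U) = G ((u + of_nat n * U) + U)"
      by (simp add: algebra_simps)
    also have "\<dots> = G (u + of_nat n * U) + G U" by (rule shift)
    finally show ?case using Suc by (simp add: algebra_simps)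
  qed simp
  have shift_int: "G (u + of_int m * U) = G u + of_int m * G U" for u m
  proof (cases m rule: int_cases2)
    case (nonneg n)
    then show ?thesis using shift_nat by simp
  next
    case (nonpos n)
    have "G u = G ((u - of_nat n * U) + of_nat n * U)" by simp
    also have "\<dots> = G (u - of_nat n * U) + of_nat n * G U" by (rule shift_nat)
    finally show ?thesis using nonpos by simp
  qed
  have "G 0 = 0" using odd[of 0] by simp
  then show "G (of_int k * U) = of_int k * G U" using shift_int[of 0 k] by simp
  assume "odd k"
  then obtain n where k: "k = 2 * n + 1" using oddE by blast
  have "G (U / 2) = G (- (U / 2) + U)" by simp
  also have "\<dots> = - G (U / 2) + G U" by (simp only: shift odd)
  finally have half: "G (U / 2) = G U / 2" by simp
  have "of_int k * U / 2 = U / 2 + of_int n * U" by (simp add: k algebra_simps)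
  then have "G (of_int k * U / 2) = G (U / 2) + of_int n * G U" by (simp only: shift_int)
  then show "G (of_int k * U / 2) = of_int k * G U / 2" by (simp add: half k algebra_simps)
qed

locale even_periodic_autonomous_ode =
  fixes g :: "real \<Rightarrow> real" and p :: real and \<phi> :: "real \<Rightarrow> real"
  assumes continuous_speed: "continuous_on UNIV g"
    and speed_pos: "\<And>y. g y > 0"
    and speed_even: "\<And>y. g (-y) = g y"
    and speed_periodic: "\<And>y. g (y + p) = g y"
    and solution: "\<And>u. (\<phi> has_real_derivative g (\<phi> u)) (at u)"
    and initial: "\<phi> 0 = 0"
begin

definition travel_time :: "real \<Rightarrow> real" where
  "travel_time x = (LBINT y=0..x. 1 / g y)"

lemma continuous_inverse_speed: "continuous_on UNIV (\<lambda>y. 1 / g y)"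
  using continuous_speed speed_pos by (auto intro!: continuous_intros simp: less_imp_neq[symmetric])

lemma has_real_derivative_travel_time: "(travel_time has_real_derivative 1 / g x) (at x)"
  unfolding travel_time_def[abs_def]
  by (rule has_real_derivative_interval_integral_0[OF continuous_inverse_speed])

lemma strict_mono_travel_time: "strict_mono travel_time"
  by (rule strict_monoI, rule DERIV_pos_imp_increasing)
    (use has_real_derivative_travel_time speed_pos in force)+

lemma travel_time_solution: "travel_time (\<phi> u) = u"
proof -
  have "((\<lambda>u. travel_time (\<phi> u) - u) has_real_derivative 0) (at u)" for u
  proof -
    have "((\<lambda>u. travel_time (\<phi> u)) has_real_derivative 1 / g (\<phi> u) * g (\<phi> u)) (at u)"
      by (rule DERIV_chain2[OF has_real_derivative_travel_time solution])
    from DERIV_diff[OF this DERIV_ident] show ?thesis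
      using speed_pos[of "\<phi> u"] by simp
  qed
  from DERIV_isconst_all[OF allI, OF this, of u 0] show ?thesis
    by (simp add: initial travel_time_def)
qed

lemma solution_eqI: "travel_time x = u \<Longrightarrow> \<phi> u = x"
  using strict_mono_eq[OF strict_mono_travel_time] travel_time_solution by metis

lemma solution_odd: "\<phi> (-u) = - \<phi> u"
proof (rule solution_eqI)
  show "travel_time (- \<phi> u) = - u"
    unfolding travel_time_def
    by (subst interval_integral_0_odd[OF continuous_inverse_speed])
      (simp_all add: speed_even travel_time_solution[unfolded travel_time_def])
qed

lemma solution_shift:
  assumes "\<phi> U = p"
  shows "\<phi> (u + U) = \<phi> u + p"
proof (rule solution_eqI)
  show "travel_time (\<phi> u + p) = u + U"
    using travel_time_solution[of u] travel_time_solution[of U] assms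
    unfolding travel_time_def
    by (subst interval_integral_0_add_period[OF continuous_inverse_speed]) (simp_all add: speed_periodic)
qed

lemma continuous_solution: "continuous_on UNIV \<phi>"
  using solution by (metis DERIV_continuous continuous_at_imp_continuous_on)

lemma interval_integral_along_solution:
  fixes K :: "real \<Rightarrow> real" and u U :: real
  assumes cont: "continuous_on UNIV K" and even: "\<And>y. K (-y) = K y"
    and periodic: "\<And>y. K (y + p) = K y" and U: "\<phi> U = p"
  shows "(LBINT s=0..-u. K (\<phi> s)) = - (LBINT s=0..u. K (\<phi> s))"
    and "(LBINT s=0..u + U. K (\<phi> s)) = (LBINT s=0..u. K (\<phi> s)) + (LBINT s=0..U. K (\<phi> s))"
proof -
  have "continuous_on UNIV (\<lambda>s. K (\<phi> s))"
    using continuous_on_compose2[OF cont continuous_solution] by blast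
  moreover have "K (\<phi> (-s)) = K (\<phi> s)" "K (\<phi> (s + U)) = K (\<phi> s)" for s
    by (simp_all add: solution_odd solution_shift[OF U] even periodic)
  ultimately show "(LBINT s=0..-u. K (\<phi> s)) = - (LBINT s=0..u. K (\<phi> s))"
    and "(LBINT s=0..u + U. K (\<phi> s)) = (LBINT s=0..u. K (\<phi> s)) + (LBINT s=0..U. K (\<phi> s))"
    by (simp_all add: interval_integral_0_odd interval_integral_0_add_period)
qed

end

definition B_angle :: "real \<Rightarrow> real \<Rightarrow> real \<Rightarrow> real" where
  "B_angle l1 l2 y = l1\<^sup>2 * (cos y)\<^sup>2 + l2\<^sup>2 * (sin y)\<^sup>2"

definition angular_speed :: "real \<Rightarrow> real \<Rightarrow> real \<Rightarrow> real \<Rightarrow> real \<Rightarrow> real" where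
  "angular_speed l1 l2 c \<theta> y =
    sqrt (c\<^sup>2 + 2 * cos \<theta> * B_angle l1 l2 y - (sin \<theta> / c)\<^sup>2 * (B_angle l1 l2 y)\<^sup>2)"

lemma Bfun_eq_B_angle: "Bfun l1 l2 \<phi> u = B_angle l1 l2 (\<phi> u)"
  by (simp add: Bfun_def B_angle_def)

lemma B_angle_bounds:
  assumes "0 < l2" "l2 \<le> l1"
  shows "0 < B_angle l1 l2 y" "B_angle l1 l2 y \<le> l1\<^sup>2"
proof -
  have B_eq: "B_angle l1 l2 y = l2\<^sup>2 + (l1\<^sup>2 - l2\<^sup>2) * (cos y)\<^sup>2"
    by (simp add: B_angle_def sin_squared_eq algebra_simps)
  have "l2\<^sup>2 \<le> l1\<^sup>2" using assms by (simp add: power_mono)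
  moreover have "0 \<le> (cos y)\<^sup>2" "(cos y)\<^sup>2 \<le> 1" by (simp_all add: abs_square_le_1)
  ultimately have "0 \<le> (l1\<^sup>2 - l2\<^sup>2) * (cos y)\<^sup>2" "(l1\<^sup>2 - l2\<^sup>2) * (cos y)\<^sup>2 \<le> l1\<^sup>2 - l2\<^sup>2"
    by (simp_all add: mult_left_le)
  moreover have "0 < l2\<^sup>2" using \<open>0 < l2\<close> by simp
  ultimately show "0 < B_angle l1 l2 y" "B_angle l1 l2 y \<le> l1\<^sup>2"
    unfolding B_eq by linarith+
qed

lemma cos_gt_if_mem_Omega:
  assumes "l1 > 0" "(c, \<theta>) \<in> Omega l1"
  shows "cos \<theta> > 1 - c\<^sup>2 / l1\<^sup>2"
proof (cases "c > sqrt 2 * l1")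
  case True
  then have "\<bar>\<theta>\<bar> < pi" using assms(2) by (simp add: Omega_def theta_plus_def)
  then have "cos \<bar>\<theta>\<bar> > cos pi" by (intro cos_monotone_0_pi) auto
  moreover have "c\<^sup>2 > (sqrt 2 * l1)\<^sup>2" using True assms(1) by (intro power_strict_mono) auto
  then have "c\<^sup>2 / l1\<^sup>2 > 2" using assms(1) by (simp add: power_mult_distrib field_simps)
  ultimately show ?thesis by simp
next
  case False
  have "c > 0" using assms(2) by (simp add: Omega_def)
  then have "c\<^sup>2 \<le> (sqrt 2 * l1)\<^sup>2" using False by (intro power_mono) auto
  then have "c\<^sup>2 / l1\<^sup>2 \<le> 2" using assms(1) by (simp add: power_mult_distrib field_simps)
  moreover have "c\<^sup>2 / l1\<^sup>2 > 0" using \<open>c > 0\<close> assms(1) by simp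
  moreover have "\<bar>\<theta>\<bar> < arccos (1 - c\<^sup>2 / l1\<^sup>2)"
    using False assms(2) by (simp add: Omega_def theta_plus_def)
  ultimately have "cos \<bar>\<theta>\<bar> > cos (arccos (1 - c\<^sup>2 / l1\<^sup>2))"
    by (intro cos_monotone_0_pi) (auto intro!: arccos_ubound)
  with \<open>c\<^sup>2 / l1\<^sup>2 \<le> 2\<close> \<open>c\<^sup>2 / l1\<^sup>2 > 0\<close> show ?thesis by simp
qed

lemma concave_quadratic_pos:
  fixes a b d L x :: real
  assumes "d \<ge> 0" "a > 0" "a + b * L - d * L\<^sup>2 > 0" "0 \<le> x" "x \<le> L"
  shows "a + b * x - d * x\<^sup>2 > 0"
proof (cases "x = L")
  case False
  then have "L > 0" using assms by simp
  have "(a + b * x - d * x\<^sup>2) * L = (L - x) * a + x * (a + b * L - d * L\<^sup>2) + d * x * L * (L - x)"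
    by (simp add: power2_eq_square algebra_simps)
  moreover have "(L - x) * a > 0" using assms False by simp
  moreover have "x * (a + b * L - d * L\<^sup>2) \<ge> 0" "d * x * L * (L - x) \<ge> 0" using assms by simp_all
  ultimately have "(a + b * x - d * x\<^sup>2) * L > 0" by linarith
  with \<open>L > 0\<close> show ?thesis by (simp add: zero_less_mult_iff)
qed (use assms in simp)

lemma radicand_pos:
  assumes "l1 > 0" "(c, \<theta>) \<in> Omega l1" "0 \<le> x" "x \<le> l1\<^sup>2"
  shows "c\<^sup>2 + 2 * cos \<theta> * x - (sin \<theta> / c)\<^sup>2 * x\<^sup>2 > 0"
proof -
  define L where "L = l1\<^sup>2"
  have "c > 0" "L > 0" using assms(1,2) by (simp_all add: Omega_def L_def)
  have "c\<^sup>2 * (c\<^sup>2 + 2 * cos \<theta> * L - (sin \<theta> / c)\<^sup>2 * L\<^sup>2)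
      = c\<^sup>2 * c\<^sup>2 + 2 * cos \<theta> * L * c\<^sup>2 - (sin \<theta>)\<^sup>2 * L\<^sup>2"
    using \<open>c > 0\<close> by (simp add: power_divide field_simps)
  also have "\<dots> = (c\<^sup>2 + cos \<theta> * L - L) * (c\<^sup>2 + cos \<theta> * L + L)"
    unfolding sin_squared_eq by (simp add: algebra_simps power2_eq_square)
  finally have factor: "c\<^sup>2 * (c\<^sup>2 + 2 * cos \<theta> * L - (sin \<theta> / c)\<^sup>2 * L\<^sup>2)
      = (c\<^sup>2 + cos \<theta> * L - L) * (c\<^sup>2 + cos \<theta> * L + L)" .
  \<comment> \<open>The first factor is positive exactly by the defining condition of \<open>\<Omega>\<close>.\<close>
  have "c\<^sup>2 + cos \<theta> * L - L > 0"
    using cos_gt_if_mem_Omega[OF assms(1,2)] \<open>L > 0\<close> by (simp add: L_def field_simps)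
  moreover have "c\<^sup>2 + cos \<theta> * L + L > 0"
  proof -
    have "cos \<theta> * L \<ge> -1 * L" using \<open>L > 0\<close> by (intro mult_right_mono) auto
    moreover have "c\<^sup>2 > 0" using \<open>c > 0\<close> by simp
    ultimately show ?thesis by linarith
  qed
  ultimately have "c\<^sup>2 * (c\<^sup>2 + 2 * cos \<theta> * L - (sin \<theta> / c)\<^sup>2 * L\<^sup>2) > 0"
    unfolding factor by (rule mult_pos_pos)
  then have at_L: "c\<^sup>2 + 2 * cos \<theta> * L - (sin \<theta> / c)\<^sup>2 * L\<^sup>2 > 0"
    using \<open>c > 0\<close> by (simp add: zero_less_mult_iff)
  show ?thesis
    by (rule concave_quadratic_pos[OF _ _ at_L])
      (use \<open>c > 0\<close> assms(3,4) in \<open>simp_all add: L_def\<close>)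
qed

lemma angular_speed_pos:
  assumes "0 < l2" "l2 \<le> l1" "(c, \<theta>) \<in> Omega l1"
  shows "angular_speed l1 l2 c \<theta> y > 0"
  using radicand_pos[OF _ assms(3)] B_angle_bounds[OF assms(1,2)] assms(1,2)
  by (simp add: angular_speed_def less_imp_le)

lemma angular_speed_ode:
  assumes "0 < l2" "l2 \<le> l1" "(c, \<theta>) \<in> Omega l1"
    and "\<And>u. (\<phi> has_real_derivative angular_speed l1 l2 c \<theta> (\<phi> u)) (at u)" "\<phi> 0 = 0"
  shows "even_periodic_autonomous_ode (angular_speed l1 l2 c \<theta>) pi \<phi>"
proof
  show "continuous_on UNIV (angular_speed l1 l2 c \<theta>)"
    unfolding angular_speed_def[abs_def] B_angle_def by (intro continuous_intros)
  show "angular_speed l1 l2 c \<theta> (-y) = angular_speed l1 l2 c \<theta> y"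
    "angular_speed l1 l2 c \<theta> (y + pi) = angular_speed l1 l2 c \<theta> y" for y
    by (simp_all add: angular_speed_def B_angle_def)
qed (use assms angular_speed_pos in auto)

theorem proposition5p4:
  fixes l1 l2 c \<theta> U :: real and \<phi> :: "real \<Rightarrow> real"
  assumes lam: "(l1 > l2 \<and> l2 > 0) \<or> (l1 = 1 \<and> l2 = 1)"
    and Om: "(c, \<theta>) \<in> Omega l1"
    and ode: "\<forall>u. (\<phi> has_real_derivative
        sqrt (c\<^sup>2 + 2 * cos \<theta> * Bfun l1 l2 \<phi> u - (sin \<theta> / c)\<^sup>2 * (Bfun l1 l2 \<phi> u)\<^sup>2)) (at u)"
    and init: "\<phi> 0 = 0"
    and U: "U > 0" "\<phi> U = pi"
  shows "(\<forall>u. Gfun l1 l2 c \<phi> (- u) = - Gfun l1 l2 c \<phi> u)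
    \<and> (\<forall>u. Gfun l1 l2 c \<phi> (u + U) = Gfun l1 l2 c \<phi> u + Gfun l1 l2 c \<phi> U)
    \<and> (\<forall>k::int. Gfun l1 l2 c \<phi> (of_int k * U) = of_int k * Gfun l1 l2 c \<phi> U)
    \<and> (\<forall>k::int. odd k \<longrightarrow> Gfun l1 l2 c \<phi> (of_int k * U / 2) = of_int k * Gfun l1 l2 c \<phi> U / 2)"
proof -
  have l: "0 < l2" "l2 \<le> l1" using lam by auto
  let ?g = "angular_speed l1 l2 c \<theta>" and ?B = "B_angle l1 l2"
  have "(\<phi> has_real_derivative ?g (\<phi> u)) (at u)" for u
    using ode by (simp add: angular_speed_def Bfun_eq_B_angle)
  then interpret even_periodic_autonomous_ode ?g pi \<phi>
    using angular_speed_ode l Om init by blast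
  define K where "K y = (c - ?g y) / ?B y" for y
  have integrand: "(\<lambda>s. (c - deriv \<phi> s) / Bfun l1 l2 \<phi> s) = (\<lambda>s. K (\<phi> s))"
    using solution by (auto simp: K_def Bfun_eq_B_angle DERIV_imp_deriv)
  have "continuous_on UNIV ?B"
    unfolding B_angle_def[abs_def] by (intro continuous_intros)
  then have "continuous_on UNIV K"
    using continuous_speed B_angle_bounds(1)[OF l]
    unfolding K_def[abs_def] by (intro continuous_intros) (auto simp: less_imp_neq[symmetric])
  moreover have "K (-y) = K y" "K (y + pi) = K y" for y
    by (simp_all add: K_def angular_speed_def B_angle_def)
  ultimately have "Gfun l1 l2 c \<phi> (-u) = - Gfun l1 l2 c \<phi> u"
      "Gfun l1 l2 c \<phi> (u + U) = Gfun l1 l2 c \<phi> u + Gfun l1 l2 c \<phi> U" for u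
    unfolding Gfun_def integrand using interval_integral_along_solution U(2) by blast+
  then show ?thesis using odd_shift_additive_multiples by blast
qed

end
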